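(* Let $A_1,B_1,B_2,C_1,C_2,C_3\in\mathbb{C}^{r\times r}$ with $C_j+mI$ invertible for all $m\ge0$, $A_1B_i=B_iA_1$ ($i=1,2$), $B_1B_2=B_2B_1$, and $C_iC_j=C_jC_i$ for $i,j\in\{1,2,3\}$. Let $n\ge1$ and suppose $A_1+mI$ is invertible for all $m\ge0$. Then $$F_4[A_1+nI]=F_4+x_1B_1\Big[\sum_{n_1=1}^nF_4[A_1+n_1I,B_1+I,C_1+I]\Big]C_1^{-1}+x_2B_2\Big[\sum_{n_1=1}^nF_4[A_1+n_1I,B_2+I,C_2+I]\Big]C_2^{-1}+x_3B_2\Big[\sum_{n_1=1}^nF_4[A_1+n_1I,B_2+I,C_3+I]\Big]C_3^{-1}.$$ Furthermore, if $A_1-n_1I$ is invertible for $0\le n_1\le n$, then $$F_4[A_1-nI]=F_4-x_1B_1\Big[\sum_{n_1=0}^{n-1}F_4[A_1-n_1I,B_1+I,C_1+I]\Big]C_1^{-1}-x_2B_2\Big[\sum_{n_1=0}^{n-1}F_4[A_1-n_1I,B_2+I,C_2+I]\Big]C_2^{-1}-x_3B_2\Big[\sum_{n_1=0}^{n-1}F_4[A_1-n_1I,B_2+I,C_3+I]\Big]C_3^{-1}.$$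
   Context: For $M\in\mathbb{C}^{r\times r}$: $(M)_0=I$, $(M)_m=M(M+I)\cdots(M+(m-1)I)$, $(M)^{-1}_m=((M)_m)^{-1}$. The three-variable Lauricella matrix function $$F_4=F_4[A_1,B_1,B_2;C_1,C_2,C_3;x_1,x_2,x_3]=\sum_{m_1,m_2,m_3\ge0}(A_1)_{m_1+m_2+m_3}(B_1)_{m_1}(B_2)_{m_2+m_3}(C_1)^{-1}_{m_1}(C_2)^{-1}_{m_2}(C_3)^{-1}_{m_3}\frac{x_1^{m_1}x_2^{m_2}x_3^{m_3}}{m_1!m_2!m_3!},$$ with scalar variables $x_1,x_2,x_3$ and matrix products in the written order; identities are of formal power series in the $x_i$. $F_4[\dots]$ lists only the shifted parameters, all others unchanged. *)

theory Defs
  imports "HOL-Analysis.Analysis"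
begin

type_synonym 'r cmat = "complex^'r^'r"

text \<open>Formal power series in three scalar variables x1,x2,x3 with matrix coefficients,
  represented by their coefficient arrays: S m1 m2 m3 is the coefficient of x1^m1 x2^m2 x3^m3.\<close>
type_synonym 'r mser = "nat \<Rightarrow> nat \<Rightarrow> nat \<Rightarrow> 'r cmat"

fun mpoch :: "('r::finite) cmat \<Rightarrow> nat \<Rightarrow> 'r cmat" where
  "mpoch M 0 = mat 1"
| "mpoch M (Suc m) = mpoch M m ** (M + mat (of_nat m))"

definition F4 :: "('r::finite) cmat \<Rightarrow> 'r cmat \<Rightarrow> 'r cmat \<Rightarrow> 'r cmat \<Rightarrow> 'r cmat \<Rightarrow> 'r cmat \<Rightarrow> 'r mser" where
  "F4 A1 B1 B2 C1 C2 C3 = (\<lambda>m1 m2 m3.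
     (1 / (fact m1 * fact m2 * fact m3)) *\<^sub>R
       (mpoch A1 (m1 + m2 + m3) ** mpoch B1 m1 ** mpoch B2 (m2 + m3)
        ** matrix_inv (mpoch C1 m1) ** matrix_inv (mpoch C2 m2) ** matrix_inv (mpoch C3 m3)))"

text \<open>Multiplication of a series by x1, x2, x3 respectively.\<close>
definition mulx1 :: "('r::finite) mser \<Rightarrow> 'r mser" where
  "mulx1 S = (\<lambda>m1 m2 m3. if m1 = 0 then 0 else S (m1 - 1) m2 m3)"
definition mulx2 :: "('r::finite) mser \<Rightarrow> 'r mser" where
  "mulx2 S = (\<lambda>m1 m2 m3. if m2 = 0 then 0 else S m1 (m2 - 1) m3)"
definition mulx3 :: "('r::finite) mser \<Rightarrow> 'r mser" where
  "mulx3 S = (\<lambda>m1 m2 m3. if m3 = 0 then 0 else S m1 m2 (m3 - 1))"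

definition sandwich :: "('r::finite) cmat \<Rightarrow> 'r mser \<Rightarrow> 'r cmat \<Rightarrow> 'r mser" where
  "sandwich M S N = (\<lambda>m1 m2 m3. M ** S m1 m2 m3 ** N)"

definition sadd :: "('r::finite) mser \<Rightarrow> 'r mser \<Rightarrow> 'r mser" where
  "sadd S T = (\<lambda>m1 m2 m3. S m1 m2 m3 + T m1 m2 m3)"
definition ssub :: "('r::finite) mser \<Rightarrow> 'r mser \<Rightarrow> 'r mser" where
  "ssub S T = (\<lambda>m1 m2 m3. S m1 m2 m3 - T m1 m2 m3)"
definition ssum :: "(nat \<Rightarrow> ('r::finite) mser) \<Rightarrow> nat set \<Rightarrow> 'r mser" where
  "ssum f I = (\<lambda>m1 m2 m3. \<Sum>k\<in>I. f k m1 m2 m3)"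

end

theory Submission
  imports Defs
begin

text \<open>The coefficient of \<open>x1^m1 x2^m2 x3^m3\<close> in \<open>F4\<close> is
  \<open>(A)_k T / (m1! m2! m3!)\<close> with \<open>k = m1 + m2 + m3\<close> and \<open>T\<close> independent
  of \<open>A\<close>. Since \<open>(A+I)_k - (A)_k = k (A+I)_(k-1)\<close>, the coefficient of
  \<open>F4[A+I] - F4\<close> splits into three parts proportional to \<open>m1\<close>, \<open>m2\<close>,
  \<open>m3\<close>. Using \<open>(M)_(m+1) = M (M+I)_m\<close> and the commutativity hypotheses to absorb
  \<open>B_i\<close> on the left and \<open>C_i^-1\<close> on the right, the part proportional to \<open>m_i\<close>
  is the coefficient of \<open>x_i B F4[A+I, B+I, C_i+I] C_i^-1\<close>, where \<open>B\<close> is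
  \<open>B1\<close> for \<open>i = 1\<close> and \<open>B2\<close> otherwise. This contiguous relation for
  \<open>A \<mapsto> A+I\<close> telescopes along \<open>A + n1 I\<close> upwards and along \<open>A - n1 I\<close>
  downwards.\<close>

lemma matrix_add_rdistrib: "((A::'a::semiring_1^'n^'m) + B) ** C = A ** C + B ** C"
  by (vector matrix_matrix_mult_def sum.distrib[symmetric] field_simps)

lemma matrix_diff_ldistrib: "(A::'a::ring_1^'n^'m) ** (B - C) = A ** B - A ** C"
  by (vector matrix_matrix_mult_def sum_subtractf[symmetric] field_simps)

lemma matrix_diff_rdistrib: "((A::'a::ring_1^'n^'m) - B) ** C = A ** C - B ** C"
  by (vector matrix_matrix_mult_def sum_subtractf[symmetric] field_simps)

lemma mat_add: "mat (a + b) = (mat a + mat b :: 'a::monoid_add^'n^'n)"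
  by (vector mat_def)

lemma matrix_mul_mat_commute: "(X::'a::comm_semiring_1^'n^'n) ** mat c = mat c ** X"
  unfolding matrix_matrix_mult_def mat_def
  by (auto simp: vec_eq_iff if_distrib if_distribR mult.commute cong: if_cong)

lemma matrix_mul_mat_of_nat:
  "(X::'a::real_algebra_1^'n^'n) ** mat (of_nat k) = real k *\<^sub>R X"
  unfolding matrix_matrix_mult_def mat_def
  by (auto simp: vec_eq_iff if_distrib if_distribR cong: if_cong)
    (simp add: scaleR_conv_of_real mult_of_nat_commute)

lemma commute_add_mat:
  "(X::'a::comm_semiring_1^'n^'n) ** M = M ** X \<Longrightarrow> X ** (M + mat c) = (M + mat c) ** X"
  by (simp add: matrix_add_ldistrib matrix_add_rdistrib matrix_mul_mat_commute)

lemma commute_diff_mat: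
  "(X::'a::comm_ring_1^'n^'n) ** M = M ** X \<Longrightarrow> X ** (M - mat c) = (M - mat c) ** X"
  by (simp add: matrix_diff_ldistrib matrix_diff_rdistrib matrix_mul_mat_commute)

lemma matrix_inv_right: "invertible (A::'a::semiring_1^'n^'m) \<Longrightarrow> A ** matrix_inv A = mat 1"
  unfolding invertible_def matrix_inv_def by (rule someI_ex[THEN conjunct1])

lemma matrix_inv_left: "invertible (A::'a::semiring_1^'n^'m) \<Longrightarrow> matrix_inv A ** A = mat 1"
  unfolding invertible_def matrix_inv_def by (rule someI_ex[THEN conjunct2])

lemma matrix_inv_unique:
  assumes "invertible (A::'a::semiring_1^'n^'n)" and "B ** A = mat 1"
  shows "matrix_inv A = B"
proof -
  have "matrix_inv A = (B ** A) ** matrix_inv A" using assms(2) by simp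
  also have "\<dots> = B" using matrix_inv_right[OF assms(1)] by (simp flip: matrix_mul_assoc)
  finally show ?thesis .
qed

lemma matrix_inv_mult:
  assumes "invertible (A::'a::semiring_1^'n^'n)" and "invertible (B::'a^'n^'n)"
  shows "matrix_inv (A ** B) = matrix_inv B ** matrix_inv A"
proof (rule matrix_inv_unique)
  show "invertible (A ** B)" using assms by (rule invertible_mult)
  have "(matrix_inv B ** matrix_inv A) ** (A ** B) = matrix_inv B ** ((matrix_inv A ** A) ** B)"
    by (simp add: matrix_mul_assoc)
  then show "(matrix_inv B ** matrix_inv A) ** (A ** B) = mat 1"
    using matrix_inv_left[OF assms(1)] matrix_inv_left[OF assms(2)] by simp
qed

lemma matrix_inv_commute:
  assumes "invertible (A::'a::semiring_1^'n^'n)" and "invertible (B::'a^'n^'n)" and "A ** B = B ** A"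
  shows "matrix_inv A ** matrix_inv B = matrix_inv B ** matrix_inv A"
  using matrix_inv_mult[of A B] matrix_inv_mult[of B A] assms by simp

lemma matrix_mul_left_commute:
  "(A::'a::semiring_1^'n^'n) ** B = B ** A \<Longrightarrow> A ** (B ** X) = B ** (A ** X)"
  by (simp add: matrix_mul_assoc)

lemma mpoch_commute:
  "(X::complex^'n^'n) ** M = M ** X \<Longrightarrow> X ** mpoch M k = mpoch M k ** X"
proof (induction k)
  case 0
  then show ?case by simp
next
  case (Suc k)
  have "X ** mpoch M (Suc k) = mpoch M k ** (X ** (M + mat (of_nat k)))"
    using Suc by (simp add: matrix_mul_assoc)
  also have "\<dots> = mpoch M (Suc k) ** X"
    using commute_add_mat[OF Suc.prems] by (simp add: matrix_mul_assoc)
  finally show ?case .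
qed

lemma mpoch_Suc_left: "mpoch (M::complex^'n^'n) (Suc k) = M ** mpoch (M + mat 1) k"
proof (induction k)
  case 0
  then show ?case by simp
next
  case (Suc k)
  then show ?case
    by (simp del: mpoch.simps(1)
        add: mpoch.simps(2)[of _ "Suc k"] matrix_mul_assoc mat_add add.assoc)
qed

lemma mpoch_add_one_diff:
  "mpoch ((M::complex^'n^'n) + mat 1) k - mpoch M k = real k *\<^sub>R mpoch (M + mat 1) (k - 1)"
proof (cases k)
  case 0
  then show ?thesis by simp
next
  case (Suc j)
  have MP: "M ** mpoch (M + mat 1) j = mpoch (M + mat 1) j ** M"
    by (intro mpoch_commute commute_add_mat) simp
  have "mpoch (M + mat 1) (Suc j) - mpoch M (Suc j)
      = mpoch (M + mat 1) j ** (M + mat 1 + mat (of_nat j) - M)"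
    unfolding mpoch_Suc_left[of M j] by (simp only: mpoch.simps(2) MP matrix_diff_ldistrib)
  also have "M + mat 1 + mat (of_nat j) - M = mat (of_nat (Suc j))"
    by (simp add: mat_add)
  also have "mpoch (M + mat 1) j ** mat (of_nat (Suc j))
      = real (Suc j) *\<^sub>R mpoch (M + mat 1) j"
    by (rule matrix_mul_mat_of_nat)
  finally show ?thesis using Suc by simp
qed

lemma invertible_mpoch:
  "(\<And>m. invertible ((M::complex^'n^'n) + mat (of_nat m))) \<Longrightarrow> invertible (mpoch M k)"
proof (induction k)
  case 0
  show ?case by (auto simp: invertible_def)
next
  case (Suc k)
  then show ?case by (simp add: invertible_mult)
qed

lemma matrix_inv_mpoch_Suc_left:
  assumes "\<And>m. invertible ((M::complex^'n^'n) + mat (of_nat m))"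
  shows "matrix_inv (mpoch M (Suc j)) = matrix_inv (mpoch (M + mat 1) j) ** matrix_inv M"
proof -
  have "invertible (M + mat 1 + mat (of_nat m))" for m
    using assms[of "Suc m"] by (simp add: mat_add add.assoc)
  then have "invertible (mpoch (M + mat 1) j)"
    by (rule invertible_mpoch)
  with assms[of 0] have "invertible M" "invertible (mpoch (M + mat 1) j)"
    by simp_all
  then show ?thesis
    unfolding mpoch_Suc_left[of M j] by (rule matrix_inv_mult)
qed

definition F4_term ::
  "('r::finite) cmat \<Rightarrow> 'r cmat \<Rightarrow> 'r cmat \<Rightarrow> 'r cmat \<Rightarrow> 'r cmat \<Rightarrow> 'r cmat \<Rightarrow>
    nat \<Rightarrow> nat \<Rightarrow> nat \<Rightarrow> 'r cmat"
  where "F4_term P B1 B2 C1 C2 C3 m1 m2 m3 = P ** mpoch B1 m1 ** mpoch B2 (m2 + m3)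
    ** matrix_inv (mpoch C1 m1) ** matrix_inv (mpoch C2 m2) ** matrix_inv (mpoch C3 m3)"

lemma F4_eq_F4_term:
  "F4 A B1 B2 C1 C2 C3 m1 m2 m3 = (1 / (fact m1 * fact m2 * fact m3)) *\<^sub>R
     F4_term (mpoch A (m1 + m2 + m3)) B1 B2 C1 C2 C3 m1 m2 m3"
  by (simp add: F4_def F4_term_def)

lemma F4_term_diff:
  "F4_term (P - Q) B1 B2 C1 C2 C3 m1 m2 m3 =
     F4_term P B1 B2 C1 C2 C3 m1 m2 m3 - F4_term Q B1 B2 C1 C2 C3 m1 m2 m3"
  by (simp add: F4_term_def matrix_diff_rdistrib)

lemma F4_term_scaleR:
  "F4_term (c *\<^sub>R P) B1 B2 C1 C2 C3 m1 m2 m3 = c *\<^sub>R F4_term P B1 B2 C1 C2 C3 m1 m2 m3"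
  by (simp add: F4_term_def scalar_matrix_assoc)

lemma F4_add_one_diff:
  "F4 (A + mat 1) B1 B2 C1 C2 C3 m1 m2 m3 - F4 A B1 B2 C1 C2 C3 m1 m2 m3 =
     (real (m1 + m2 + m3) / (fact m1 * fact m2 * fact m3)) *\<^sub>R
       F4_term (mpoch (A + mat 1) (m1 + m2 + m3 - 1)) B1 B2 C1 C2 C3 m1 m2 m3"
  by (simp add: F4_eq_F4_term mpoch_add_one_diff F4_term_scaleR
      flip: F4_term_diff scaleR_diff_right)

lemma matrix_mul_scaleR_middle: "M ** (c *\<^sub>R X) ** N = c *\<^sub>R (M ** X ** N)"
  for M X N :: "complex^'n^'n"
  by (simp add: matrix_scalar_ac scalar_matrix_assoc[symmetric])

lemma matrix_inv_mpoch_commute: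
  assumes "\<And>m::nat. invertible (C + mat (of_nat m))"
    and "\<And>m::nat. invertible (C' + mat (of_nat m))"
    and "C ** C' = C' ** C"
  shows "matrix_inv (mpoch C' m) ** matrix_inv C = matrix_inv C ** matrix_inv (mpoch C' m)"
  using assms(1)[of 0]
  by (intro matrix_inv_commute invertible_mpoch assms(2)) (simp_all add: mpoch_commute assms(3))

definition F4_A_increment ::
  "('r::finite) cmat \<Rightarrow> 'r cmat \<Rightarrow> 'r cmat \<Rightarrow> 'r cmat \<Rightarrow> 'r cmat \<Rightarrow> 'r cmat \<Rightarrow> 'r mser"
  where "F4_A_increment A B1 B2 C1 C2 C3 =
    sadd (sadd (mulx1 (sandwich B1 (F4 A (B1 + mat 1) B2 (C1 + mat 1) C2 C3) (matrix_inv C1)))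
               (mulx2 (sandwich B2 (F4 A B1 (B2 + mat 1) C1 (C2 + mat 1) C3) (matrix_inv C2))))
          (mulx3 (sandwich B2 (F4 A B1 (B2 + mat 1) C1 C2 (C3 + mat 1)) (matrix_inv C3)))"

context
  fixes B1 B2 C1 C2 C3 :: "('r::finite) cmat"
  assumes C1inv: "\<And>m::nat. invertible (C1 + mat (of_nat m))"
      and C2inv: "\<And>m::nat. invertible (C2 + mat (of_nat m))"
      and C3inv: "\<And>m::nat. invertible (C3 + mat (of_nat m))"
      and BB: "B1 ** B2 = B2 ** B1"
      and CC12: "C1 ** C2 = C2 ** C1" and CC13: "C1 ** C3 = C3 ** C1"
      and CC23: "C2 ** C3 = C3 ** C2"
begin

lemma F4_term_absorb_x1:
  assumes "B1 ** P = P ** B1"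
  shows "B1 ** F4_term P (B1 + mat 1) B2 (C1 + mat 1) C2 C3 j m2 m3 ** matrix_inv C1
       = F4_term P B1 B2 C1 C2 C3 (Suc j) m2 m3"
proof -
  have B: "B1 ** (mpoch (B1 + mat 1) j ** X) = mpoch B1 (Suc j) ** X" for X :: "'r cmat"
    by (simp only: mpoch_Suc_left matrix_mul_assoc)
  have C: "matrix_inv (mpoch (C1 + mat 1) j) ** (matrix_inv C1 ** X) =
      matrix_inv (mpoch C1 (Suc j)) ** X" for X :: "'r cmat"
    by (simp only: matrix_inv_mpoch_Suc_left[OF C1inv] matrix_mul_assoc)
  note C12 = matrix_inv_mpoch_commute[OF C1inv C2inv CC12, of m2]
  note C13 = matrix_inv_mpoch_commute[OF C1inv C3inv CC13, of m3]
  show ?thesis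
    unfolding F4_term_def
    by (simp only: matrix_mul_assoc[symmetric] matrix_mul_left_commute[OF assms] B C13
        matrix_mul_left_commute[OF C12] C)
qed

lemma F4_term_absorb_x2:
  assumes "B2 ** P = P ** B2"
  shows "B2 ** F4_term P B1 (B2 + mat 1) C1 (C2 + mat 1) C3 m1 j m3 ** matrix_inv C2
       = F4_term P B1 B2 C1 C2 C3 m1 (Suc j) m3"
proof -
  have B: "B2 ** (mpoch (B2 + mat 1) (j + m3) ** X) = mpoch B2 (Suc j + m3) ** X" for X :: "'r cmat"
    by (simp only: add_Suc mpoch_Suc_left matrix_mul_assoc)
  have C: "matrix_inv (mpoch (C2 + mat 1) j) ** (matrix_inv C2 ** X) =
      matrix_inv (mpoch C2 (Suc j)) ** X" for X :: "'r cmat"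
    by (simp only: matrix_inv_mpoch_Suc_left[OF C2inv] matrix_mul_assoc)
  note C23 = matrix_inv_mpoch_commute[OF C2inv C3inv CC23, of m3]
  show ?thesis
    unfolding F4_term_def
    by (simp only: matrix_mul_assoc[symmetric] matrix_mul_left_commute[OF assms]
        matrix_mul_left_commute[OF mpoch_commute[OF BB[symmetric]]] B C23 C)
qed

lemma F4_term_absorb_x3:
  assumes "B2 ** P = P ** B2"
  shows "B2 ** F4_term P B1 (B2 + mat 1) C1 C2 (C3 + mat 1) m1 m2 j ** matrix_inv C3
       = F4_term P B1 B2 C1 C2 C3 m1 m2 (Suc j)"
proof -
  have B: "B2 ** (mpoch (B2 + mat 1) (m2 + j) ** X) = mpoch B2 (m2 + Suc j) ** X" for X :: "'r cmat"
    by (simp only: add_Suc_right mpoch_Suc_left matrix_mul_assoc)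
  show ?thesis
    unfolding F4_term_def
    by (simp only: matrix_mul_assoc[symmetric] matrix_mul_left_commute[OF assms]
        matrix_mul_left_commute[OF mpoch_commute[OF BB[symmetric]]] B
        matrix_inv_mpoch_Suc_left[OF C3inv])
qed

lemma mulx1_F4_contiguous:
  assumes "A ** B1 = B1 ** A"
  shows "mulx1 (sandwich B1 (F4 A (B1 + mat 1) B2 (C1 + mat 1) C2 C3) (matrix_inv C1)) m1 m2 m3 =
    (real m1 / (fact m1 * fact m2 * fact m3)) *\<^sub>R
      F4_term (mpoch A (m1 + m2 + m3 - 1)) B1 B2 C1 C2 C3 m1 m2 m3"
proof (cases m1)
  case (Suc j)
  have "B1 ** mpoch A (j + m2 + m3) = mpoch A (j + m2 + m3) ** B1"
    using assms by (intro mpoch_commute) simp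
  from F4_term_absorb_x1[OF this] show ?thesis
    using Suc by (simp add: mulx1_def sandwich_def F4_eq_F4_term matrix_mul_scaleR_middle)
qed (simp add: mulx1_def)

lemma mulx2_F4_contiguous:
  assumes "A ** B2 = B2 ** A"
  shows "mulx2 (sandwich B2 (F4 A B1 (B2 + mat 1) C1 (C2 + mat 1) C3) (matrix_inv C2)) m1 m2 m3 =
    (real m2 / (fact m1 * fact m2 * fact m3)) *\<^sub>R
      F4_term (mpoch A (m1 + m2 + m3 - 1)) B1 B2 C1 C2 C3 m1 m2 m3"
proof (cases m2)
  case (Suc j)
  have "B2 ** mpoch A (m1 + j + m3) = mpoch A (m1 + j + m3) ** B2"
    using assms by (intro mpoch_commute) simp
  from F4_term_absorb_x2[OF this] show ?thesis
    using Suc by (simp add: mulx2_def sandwich_def F4_eq_F4_term matrix_mul_scaleR_middle)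
qed (simp add: mulx2_def)

lemma mulx3_F4_contiguous:
  assumes "A ** B2 = B2 ** A"
  shows "mulx3 (sandwich B2 (F4 A B1 (B2 + mat 1) C1 C2 (C3 + mat 1)) (matrix_inv C3)) m1 m2 m3 =
    (real m3 / (fact m1 * fact m2 * fact m3)) *\<^sub>R
      F4_term (mpoch A (m1 + m2 + m3 - 1)) B1 B2 C1 C2 C3 m1 m2 m3"
proof (cases m3)
  case (Suc j)
  have "B2 ** mpoch A (m1 + m2 + j) = mpoch A (m1 + m2 + j) ** B2"
    using assms by (intro mpoch_commute) simp
  from F4_term_absorb_x3[OF this] show ?thesis
    using Suc by (simp add: mulx3_def sandwich_def F4_eq_F4_term matrix_mul_scaleR_middle)
qed (simp add: mulx3_def)

lemma F4_A_add_one: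
  assumes AB1: "A ** B1 = B1 ** A" and AB2: "A ** B2 = B2 ** A"
  shows "F4 (A + mat 1) B1 B2 C1 C2 C3 =
    sadd (F4 A B1 B2 C1 C2 C3) (F4_A_increment (A + mat 1) B1 B2 C1 C2 C3)"
proof (intro ext)
  fix m1 m2 m3
  define f :: real where "f = fact m1 * fact m2 * fact m3"
  define T where "T = F4_term (mpoch (A + mat 1) (m1 + m2 + m3 - 1)) B1 B2 C1 C2 C3 m1 m2 m3"
  have "F4 (A + mat 1) B1 B2 C1 C2 C3 m1 m2 m3 - F4 A B1 B2 C1 C2 C3 m1 m2 m3
      = (real m1 / f) *\<^sub>R T + (real m2 / f) *\<^sub>R T + (real m3 / f) *\<^sub>R T"
    unfolding F4_add_one_diff f_def T_def by (simp add: add_divide_distrib scaleR_left_distrib)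
  also have "\<dots> = F4_A_increment (A + mat 1) B1 B2 C1 C2 C3 m1 m2 m3"
    using commute_add_mat[OF AB1[symmetric]] commute_add_mat[OF AB2[symmetric]]
    by (simp add: F4_A_increment_def sadd_def f_def T_def
        mulx1_F4_contiguous mulx2_F4_contiguous mulx3_F4_contiguous)
  finally show "F4 (A + mat 1) B1 B2 C1 C2 C3 m1 m2 m3 =
      sadd (F4 A B1 B2 C1 C2 C3) (F4_A_increment (A + mat 1) B1 B2 C1 C2 C3) m1 m2 m3"
    by (simp add: sadd_def algebra_simps)
qed

lemma F4_A_add_nat:
  assumes AB1: "A ** B1 = B1 ** A" and AB2: "A ** B2 = B2 ** A"
  shows "F4 (A + mat (of_nat n)) B1 B2 C1 C2 C3 =
    sadd (F4 A B1 B2 C1 C2 C3)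
      (ssum (\<lambda>n1. F4_A_increment (A + mat (of_nat n1)) B1 B2 C1 C2 C3) {1..n})"
proof (induction n)
  case 0
  then show ?case by (simp add: sadd_def ssum_def)
next
  case (Suc n)
  have "A + mat (of_nat (Suc n)) = (A + mat (of_nat n)) + mat 1"
    by (simp add: mat_add add.assoc)
  with F4_A_add_one[OF commute_add_mat[OF AB1[symmetric], symmetric]
      commute_add_mat[OF AB2[symmetric], symmetric]]
  show ?case
    using Suc by (simp add: sadd_def ssum_def add.assoc)
qed

lemma F4_A_diff_nat:
  assumes AB1: "A ** B1 = B1 ** A" and AB2: "A ** B2 = B2 ** A"
  shows "F4 (A - mat (of_nat n)) B1 B2 C1 C2 C3 =
    ssub (F4 A B1 B2 C1 C2 C3)
      (ssum (\<lambda>n1. F4_A_increment (A - mat (of_nat n1)) B1 B2 C1 C2 C3) {..<n})"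
proof (induction n)
  case 0
  then show ?case by (simp add: ssub_def ssum_def)
next
  case (Suc n)
  have shift: "A - mat (of_nat (Suc n)) + mat 1 = A - mat (of_nat n)"
    by (simp add: mat_add)
  have "F4 (A - mat (of_nat n)) B1 B2 C1 C2 C3 =
      sadd (F4 (A - mat (of_nat (Suc n))) B1 B2 C1 C2 C3)
        (F4_A_increment (A - mat (of_nat n)) B1 B2 C1 C2 C3)"
    using F4_A_add_one[OF commute_diff_mat[OF AB1[symmetric], symmetric]
        commute_diff_mat[OF AB2[symmetric], symmetric], of "of_nat (Suc n)"]
    unfolding shift .
  with Suc show ?case
    by (simp add: sadd_def ssub_def ssum_def fun_eq_iff algebra_simps)
qed

end

lemma matrix_mul_sum_left: "(M::'a::semiring_1^'n^'m) ** sum g I = (\<Sum>i\<in>I. M ** g i)"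
  by (induction I rule: infinite_finite_induct) (simp_all add: matrix_add_ldistrib)

lemma matrix_mul_sum_right: "sum g I ** (N::'a::semiring_1^'n^'m) = (\<Sum>i\<in>I. g i ** N)"
  by (induction I rule: infinite_finite_induct) (simp_all add: matrix_add_rdistrib)

lemma sandwich_ssum: "sandwich M (ssum f I) N = ssum (\<lambda>i. sandwich M (f i) N) I"
  by (simp add: sandwich_def ssum_def matrix_mul_sum_left matrix_mul_sum_right)

lemma mulx1_ssum: "mulx1 (ssum f I) = ssum (\<lambda>i. mulx1 (f i)) I"
  by (simp add: mulx1_def ssum_def fun_eq_iff)

lemma mulx2_ssum: "mulx2 (ssum f I) = ssum (\<lambda>i. mulx2 (f i)) I"
  by (simp add: mulx2_def ssum_def fun_eq_iff)

lemma mulx3_ssum: "mulx3 (ssum f I) = ssum (\<lambda>i. mulx3 (f i)) I"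
  by (simp add: mulx3_def ssum_def fun_eq_iff)

lemma ssum_sadd: "ssum (\<lambda>i. sadd (f i) (g i)) I = sadd (ssum f I) (ssum g I)"
  by (simp add: ssum_def sadd_def sum.distrib)

lemma sadd_assoc: "sadd S (sadd T U) = sadd (sadd S T) U"
  by (simp add: sadd_def add.assoc)

lemma ssub_sadd: "ssub S (sadd T U) = ssub (ssub S T) U"
  by (simp add: ssub_def sadd_def diff_diff_eq)

theorem mainTheorem16:
  fixes A1 B1 B2 C1 C2 C3 :: "('r::finite) cmat" and n :: nat
  assumes C1inv: "\<And>m::nat. invertible (C1 + mat (of_nat m))"
      and C2inv: "\<And>m::nat. invertible (C2 + mat (of_nat m))"
      and C3inv: "\<And>m::nat. invertible (C3 + mat (of_nat m))"
      and AB1: "A1 ** B1 = B1 ** A1" and AB2: "A1 ** B2 = B2 ** A1"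
      and BB: "B1 ** B2 = B2 ** B1"
      and CC12: "C1 ** C2 = C2 ** C1" and CC13: "C1 ** C3 = C3 ** C1"
      and CC23: "C2 ** C3 = C3 ** C2"
      and n: "n \<ge> 1"
      and Ainv: "\<And>m::nat. invertible (A1 + mat (of_nat m))"
  shows "F4 (A1 + mat (of_nat n)) B1 B2 C1 C2 C3 =
           sadd (sadd (sadd (F4 A1 B1 B2 C1 C2 C3)
             (mulx1 (sandwich B1 (ssum (\<lambda>n1. F4 (A1 + mat (of_nat n1)) (B1 + mat 1) B2 (C1 + mat 1) C2 C3) {1..n}) (matrix_inv C1))))
             (mulx2 (sandwich B2 (ssum (\<lambda>n1. F4 (A1 + mat (of_nat n1)) B1 (B2 + mat 1) C1 (C2 + mat 1) C3) {1..n}) (matrix_inv C2))))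
             (mulx3 (sandwich B2 (ssum (\<lambda>n1. F4 (A1 + mat (of_nat n1)) B1 (B2 + mat 1) C1 C2 (C3 + mat 1)) {1..n}) (matrix_inv C3)))
         \<and> ((\<forall>n1\<le>n. invertible (A1 - mat (of_nat n1))) \<longrightarrow>
           F4 (A1 - mat (of_nat n)) B1 B2 C1 C2 C3 =
           ssub (ssub (ssub (F4 A1 B1 B2 C1 C2 C3)
             (mulx1 (sandwich B1 (ssum (\<lambda>n1. F4 (A1 - mat (of_nat n1)) (B1 + mat 1) B2 (C1 + mat 1) C2 C3) {0..n-1}) (matrix_inv C1))))
             (mulx2 (sandwich B2 (ssum (\<lambda>n1. F4 (A1 - mat (of_nat n1)) B1 (B2 + mat 1) C1 (C2 + mat 1) C3) {0..n-1}) (matrix_inv C2))))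
             (mulx3 (sandwich B2 (ssum (\<lambda>n1. F4 (A1 - mat (of_nat n1)) B1 (B2 + mat 1) C1 C2 (C3 + mat 1)) {0..n-1}) (matrix_inv C3))))"
proof -
  have "{0..n-1} = {..<n}" using n by auto
  then show ?thesis
    using F4_A_add_nat[OF C1inv C2inv C3inv BB CC12 CC13 CC23 AB1 AB2, of n]
      F4_A_diff_nat[OF C1inv C2inv C3inv BB CC12 CC13 CC23 AB1 AB2, of n]
    by (simp add: F4_A_increment_def sandwich_ssum mulx1_ssum mulx2_ssum mulx3_ssum ssum_sadd
        sadd_assoc ssub_sadd)
qed

end
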